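(* Let $a_i,b_i,c_i,x_i,y_i\in\mathbb{C}$ and $d_i,e_i\in\mathbb{C}\setminus\{q^{-m}:m\ge0\}$ for $i=1,2$, and let $t\in\mathbb{C}$. Assume $x_1\neq0$ and $|t|\max(|x_1|,|y_1|)\max(|x_2|,|y_2|)<1$. Then $$\sum_{n=0}^\infty\phi_n^{(a_1,b_1,c_1;d_1,e_1)}(x_1,y_1|q)\,\phi_n^{(a_2,b_2,c_2;d_2,e_2)}(x_2,y_2|q)\frac{t^n}{(q;q)_n}$$ $$=\frac{1}{(x_1x_2t;q)_\infty}\sum_{n=0}^\infty\frac{(a_2,b_2,c_2;q)_n(x_1y_2t)^n}{(q,d_2,e_2;q)_n}\sum_{j=0}^{n}\frac{(q^{n-j+1},x_1x_2t,a_1,b_1,c_1;q)_j}{(q,d_1,e_1;q)_j}\Big(\frac{y_1}{x_1}\Big)^j\sum_{l=0}^\infty\frac{(a_1q^j,b_1q^j,c_1q^j;q)_l}{(q,d_1q^j,e_1q^j;q)_l}(x_2y_1t)^l.$$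
   Context: Throughout, $0<q<1$. $(\alpha;q)_0=1$, $(\alpha;q)_n=\prod_{j=0}^{n-1}(1-\alpha q^j)$, $(\alpha;q)_\infty=\prod_{j\ge0}(1-\alpha q^j)$, and $(\alpha_1,\dots,\alpha_r;q)_n=\prod_i(\alpha_i;q)_n$. $\begin{bmatrix}n\\k\end{bmatrix}=\frac{(q;q)_n}{(q;q)_k(q;q)_{n-k}}$. $$\phi_n^{(a,b,c;d,e)}(x,y|q)=\sum_{k=0}^n\begin{bmatrix}n\\k\end{bmatrix}\frac{(a,b,c;q)_k}{(d,e;q)_k}x^{n-k}y^k.$$ *)

theory Defs
  imports "HOL-Analysis.Analysis"
begin

definition qpoch :: "complex \<Rightarrow> complex \<Rightarrow> nat \<Rightarrow> complex" where
  "qpoch a q n = (\<Prod>j<n. 1 - a * q ^ j)"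

definition qpoch_inf :: "complex \<Rightarrow> complex \<Rightarrow> complex" where
  "qpoch_inf a q = (\<Prod>j. 1 - a * q ^ j)"

definition qbinom :: "complex \<Rightarrow> nat \<Rightarrow> nat \<Rightarrow> complex" where
  "qbinom q n k = qpoch q q n / (qpoch q q k * qpoch q q (n - k))"

definition qphi :: "complex \<Rightarrow> complex \<Rightarrow> complex \<Rightarrow> complex \<Rightarrow> complex \<Rightarrow> complex \<Rightarrow> complex
    \<Rightarrow> complex \<Rightarrow> nat \<Rightarrow> complex" where
  "qphi a b c d e x y q n =
     (\<Sum>k\<le>n. qbinom q n k * (qpoch a q k * qpoch b q k * qpoch c q k)
                / (qpoch d q k * qpoch e q k) * x ^ (n - k) * y ^ k)"

end

theory Submission
  imports Defs
begin

(* The identity is a rearrangement of a single absolutely convergent four-fold series.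
   Writing A_k = (a1,b1,c1;q)_k / (d1,e1;q)_k and B_n likewise, consider

     T(n,j,l,p) = B_n (x1 y2 t)^n / (q;q)_n * [n j] (y1/x1)^j
                  * A_(j+l) (x2 y1 t)^l / (q;q)_l * (x1 x2 t q^j)^p / (q;q)_p.

   Summing over p with Euler's formula  sum_p z^p / (q;q)_p = 1 / (z;q)_inf  at z = x1 x2 t q^j
   gives (x1 x2 t;q)_j / (x1 x2 t;q)_inf, and the l-sum is the tail of the inner series:
   this is the right-hand side.  Grouping instead by N = n + l + p, the (j,l)-sums collapse
   by the q-Vandermonde convolution to phi_N(x1,y1) phi_N(x2,y2) t^N / (q;q)_N.
   Absolute convergence only uses that A and B are bounded (the hypothesis on d_i, e_i)
   and the bound on |t|, so the rearrangement is done for arbitrary bounded coefficients. *)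

section \<open>q-Pochhammer symbols\<close>

lemma qpoch_0 [simp]: "qpoch a Q 0 = 1"
  by (simp add: qpoch_def)

lemma qpoch_Suc: "qpoch a Q (Suc n) = qpoch a Q n * (1 - a * Q ^ n)"
  by (simp add: qpoch_def)

lemma qpoch_add: "qpoch a Q (j + l) = qpoch a Q j * qpoch (a * Q ^ j) Q l"
  by (induction l) (simp_all add: qpoch_Suc power_add mult.assoc)

lemma qpoch_eq_0_iff: "qpoch a Q n = 0 \<longleftrightarrow> (\<exists>k<n. a * Q ^ k = 1)"
  by (auto simp: qpoch_def)

definition hyper_coeff :: "complex \<Rightarrow> complex \<Rightarrow> complex \<Rightarrow> complex \<Rightarrow> complex \<Rightarrow> complex \<Rightarrow> nat \<Rightarrow> complex" where
  "hyper_coeff a b c d e Q k = qpoch a Q k * qpoch b Q k * qpoch c Q k / (qpoch d Q k * qpoch e Q k)"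

lemma hyper_coeff_add:
  "hyper_coeff a b c d e Q (j + l)
    = hyper_coeff a b c d e Q j * hyper_coeff (a * Q ^ j) (b * Q ^ j) (c * Q ^ j) (d * Q ^ j) (e * Q ^ j) Q l"
  by (simp add: hyper_coeff_def qpoch_add divide_inverse inverse_mult_distrib mult_ac)

lemma mult_power_ne_1_iff:
  fixes d Q :: "'a::field"
  assumes "Q \<noteq> 0"
  shows "d * Q ^ m \<noteq> 1 \<longleftrightarrow> d \<noteq> 1 / Q ^ m"
  using assms by (auto simp: nonzero_eq_divide_eq)

context
  fixes Q :: complex
  assumes Q: "norm Q < 1"
begin

lemma norm_mult_power_le: "norm (w * Q ^ n) \<le> norm w"
  using Q by (simp add: norm_mult norm_power mult_left_le power_le_one)

lemma mult_power_ne_1: "norm w < 1 \<Longrightarrow> w * Q ^ k \<noteq> 1"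
  using norm_mult_power_le[of w k] by (metis norm_one order.strict_trans1 order_less_irrefl)

lemma qpoch_self_nonzero: "qpoch Q Q n \<noteq> 0"
  using mult_power_ne_1 Q by (simp add: qpoch_eq_0_iff)

lemma convergent_prod_qpoch: "convergent_prod (\<lambda>k. 1 - a * Q ^ k)"
proof -
  have "summable (\<lambda>k. norm ((1 - a * Q ^ k) - 1))"
    using Q by (simp add: norm_mult norm_power summable_geometric)
  then show ?thesis
    by (intro abs_convergent_prod_imp_convergent_prod summable_imp_abs_convergent_prod)
qed

lemma qpoch_LIMSEQ: "qpoch a Q \<longlonglongrightarrow> qpoch_inf a Q"
proof -
  have "(\<lambda>n. \<Prod>k\<le>n. 1 - a * Q ^ k) \<longlonglongrightarrow> qpoch_inf a Q"
    unfolding qpoch_inf_def by (rule convergent_prod_LIMSEQ[OF convergent_prod_qpoch])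
  then show ?thesis
    unfolding qpoch_def[abs_def] by (simp add: LIMSEQ_lessThan_iff_atMost)
qed

lemma qpoch_inf_nonzero: "(\<And>k. a * Q ^ k \<noteq> 1) \<Longrightarrow> qpoch_inf a Q \<noteq> 0"
  unfolding qpoch_inf_def by (rule prodinf_nonzero[OF convergent_prod_qpoch]) auto

lemma Bseq_qpoch: "Bseq (qpoch a Q)"
  using qpoch_LIMSEQ by (rule convergent_imp_Bseq[OF convergentI])

lemma Bseq_inverse_qpoch:
  assumes "\<And>k. a * Q ^ k \<noteq> 1"
  shows "Bseq (\<lambda>n. inverse (qpoch a Q n))"
proof -
  have "(\<lambda>n. inverse (qpoch a Q n)) \<longlonglongrightarrow> inverse (qpoch_inf a Q)"
    using qpoch_LIMSEQ qpoch_inf_nonzero[OF assms] by (rule tendsto_inverse)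
  then show ?thesis
    by (rule convergent_imp_Bseq[OF convergentI])
qed

lemma inverse_qpoch_self_bound:
  obtains K where "\<And>n. norm (inverse (qpoch Q Q n)) \<le> K"
  using Bseq_inverse_qpoch[OF mult_power_ne_1[OF Q]] BseqE by metis

lemma Bseq_hyper_coeff:
  assumes "\<And>k. d * Q ^ k \<noteq> 1" "\<And>k. e * Q ^ k \<noteq> 1"
  shows "Bseq (hyper_coeff a b c d e Q)"
  unfolding hyper_coeff_def[abs_def] divide_inverse inverse_mult_distrib
  by (intro Bseq_mult Bseq_qpoch Bseq_inverse_qpoch assms)

end

section \<open>Euler's q-exponential\<close>

definition q_exp :: "complex \<Rightarrow> complex \<Rightarrow> complex" where
  "q_exp Q w = (\<Sum>p. w ^ p / qpoch Q Q p)"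

context
  fixes Q :: complex
  assumes Q: "norm Q < 1"
begin

lemma summable_norm_q_exp:
  assumes w: "norm w < 1"
  shows "summable (\<lambda>p. norm (w ^ p / qpoch Q Q p))"
proof -
  obtain K where K: "\<And>p. norm (inverse (qpoch Q Q p)) \<le> K"
    using inverse_qpoch_self_bound[OF Q] by blast
  have bound: "norm (w ^ p / qpoch Q Q p) \<le> norm w ^ p * K" for p
    unfolding divide_inverse norm_mult norm_power by (rule mult_left_mono[OF K]) simp
  have "summable (\<lambda>p. norm w ^ p * K)"
    using w by (intro summable_mult2 summable_geometric) simp
  then show ?thesis
    by (rule summable_comparison_test'[where N = 0]) (simp add: bound)
qed

lemma q_exp_sums: "norm w < 1 \<Longrightarrow> (\<lambda>p. w ^ p / qpoch Q Q p) sums q_exp Q w"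
  unfolding q_exp_def by (rule summable_sums, rule summable_norm_cancel, rule summable_norm_q_exp)

lemma q_exp_functional_eq:
  assumes w: "norm w < 1"
  shows "q_exp Q w * (1 - w) = q_exp Q (w * Q)"
proof -
  define f where "f p = w ^ p / qpoch Q Q p" for p
  define g where "g p = (w * Q) ^ p / qpoch Q Q p" for p
  have "norm (w * Q) < 1"
    using norm_mult_power_le[OF Q, of w 1] w by simp
  then have fg: "(\<lambda>p. f p - g p) sums (q_exp Q w - q_exp Q (w * Q))"
    unfolding f_def g_def by (intro sums_diff q_exp_sums w)
  have shift: "f (Suc p) - g (Suc p) = w * f p" for p
  proof -
    have "1 - Q * Q ^ p \<noteq> 0"
      using mult_power_ne_1[OF Q Q, of p] by simp
    have "f (Suc p) - g (Suc p) = w ^ Suc p * (1 - Q * Q ^ p) / (qpoch Q Q p * (1 - Q * Q ^ p))"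
      unfolding f_def g_def qpoch_Suc power_mult_distrib diff_divide_distrib[symmetric]
      by (simp add: right_diff_distrib)
    also have "\<dots> = w * f p"
      using \<open>1 - Q * Q ^ p \<noteq> 0\<close> by (simp add: f_def)
    finally show ?thesis .
  qed
  have "(\<lambda>p. w * f p) sums (w * q_exp Q w)"
    unfolding f_def by (rule sums_mult[OF q_exp_sums[OF w]])
  then have "(\<lambda>p. f (Suc p) - g (Suc p)) sums (w * q_exp Q w)"
    by (simp only: shift)
  then have "(\<lambda>p. f p - g p) sums (w * q_exp Q w + (f 0 - g 0))"
    by (rule iffD1[OF sums_Suc_iff])
  then have "(\<lambda>p. f p - g p) sums (w * q_exp Q w)"
    by (simp add: f_def g_def)
  with fg have "q_exp Q w - q_exp Q (w * Q) = w * q_exp Q w"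
    by (rule sums_unique2)
  then show ?thesis
    by (simp add: algebra_simps)
qed

lemma q_exp_mult_qpoch:
  assumes z: "norm z < 1"
  shows "q_exp Q z * qpoch z Q N = q_exp Q (z * Q ^ N)"
proof (induction N)
  case (Suc N)
  have "q_exp Q z * qpoch z Q (Suc N) = q_exp Q (z * Q ^ N) * (1 - z * Q ^ N)"
    by (simp add: qpoch_Suc Suc.IH[symmetric] mult.assoc)
  also have "\<dots> = q_exp Q (z * Q ^ N * Q)"
    using norm_mult_power_le[OF Q, of z N] z by (intro q_exp_functional_eq) simp
  also have "\<dots> = q_exp Q (z * Q ^ Suc N)"
    by (simp add: ac_simps)
  finally show ?case .
qed simp

lemma isCont_q_exp_0: "isCont (q_exp Q) 0"
proof -
  have "summable (\<lambda>p. (1 / 2) ^ p / qpoch Q Q p)"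
    by (rule summable_norm_cancel, rule summable_norm_q_exp) simp
  then have "isCont (\<lambda>w. \<Sum>p. inverse (qpoch Q Q p) * w ^ p) 0"
    unfolding divide_inverse_commute by (rule isCont_powser) simp
  then show ?thesis
    unfolding q_exp_def[abs_def] divide_inverse_commute .
qed

lemma q_exp_0 [simp]: "q_exp Q 0 = 1"
  unfolding q_exp_def divide_inverse_commute by simp

lemma q_exp_mult_qpoch_inf:
  assumes z: "norm z < 1"
  shows "q_exp Q z * qpoch_inf z Q = 1"
proof -
  have "(\<lambda>N. z * Q ^ N) \<longlonglongrightarrow> z * 0"
    by (rule tendsto_mult_left[OF LIMSEQ_power_zero[OF Q]])
  then have "(\<lambda>N. q_exp Q (z * Q ^ N)) \<longlonglongrightarrow> q_exp Q 0"
    using isCont_tendsto_compose[OF isCont_q_exp_0] by simp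
  then have "(\<lambda>N. q_exp Q z * qpoch z Q N) \<longlonglongrightarrow> 1"
    by (simp add: q_exp_mult_qpoch[OF z])
  moreover have "(\<lambda>N. q_exp Q z * qpoch z Q N) \<longlonglongrightarrow> q_exp Q z * qpoch_inf z Q"
    by (rule tendsto_mult_left[OF qpoch_LIMSEQ[OF Q]])
  ultimately show ?thesis
    using LIMSEQ_unique by blast
qed

lemma sums_qpoch_divide_qpoch_inf:
  assumes z: "norm z < 1"
  shows "(\<lambda>p. (z * Q ^ j) ^ p / qpoch Q Q p) sums (qpoch z Q j / qpoch_inf z Q)"
proof -
  have "norm (z * Q ^ j) < 1"
    using norm_mult_power_le[OF Q, of z j] z by simp
  moreover have "inverse (qpoch_inf z Q) = q_exp Q z"
    using q_exp_mult_qpoch_inf[OF z] by (intro inverse_unique) (simp add: mult.commute)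
  then have "q_exp Q (z * Q ^ j) = qpoch z Q j / qpoch_inf z Q"
    by (simp add: q_exp_mult_qpoch[OF z, symmetric] divide_inverse_commute)
  ultimately show ?thesis
    using q_exp_sums by metis
qed

end

section \<open>Gaussian binomial coefficients\<close>

(* qbinom does not vanish for k > n, where n - k truncates to 0; this version does. *)
definition gauss_binom :: "complex \<Rightarrow> nat \<Rightarrow> nat \<Rightarrow> complex" where
  "gauss_binom Q n k = (if k \<le> n then qpoch Q Q n / (qpoch Q Q k * qpoch Q Q (n - k)) else 0)"

lemma gauss_binom_eq_0 [simp]: "n < k \<Longrightarrow> gauss_binom Q n k = 0"
  by (simp add: gauss_binom_def)

lemma gauss_binom_nonzero_imp_le: "gauss_binom Q n k \<noteq> 0 \<Longrightarrow> k \<le> n"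
  using gauss_binom_eq_0 not_le by blast

lemma qbinom_eq_gauss_binom: "k \<le> n \<Longrightarrow> qbinom Q n k = gauss_binom Q n k"
  by (simp add: qbinom_def gauss_binom_def)

context
  fixes Q :: complex
  assumes nz: "\<And>i. qpoch Q Q i \<noteq> 0"
begin

lemma gauss_binom_0_right [simp]: "gauss_binom Q n 0 = 1"
  using nz by (simp add: gauss_binom_def)

lemma gauss_binom_self [simp]: "gauss_binom Q n n = 1"
  using nz by (simp add: gauss_binom_def)

lemma gauss_binom_Suc_Suc:
  "gauss_binom Q (Suc n) (Suc k) = gauss_binom Q n k + Q ^ Suc k * gauss_binom Q n (Suc k)"
proof (cases "k < n")
  case True
  define a where "a = qpoch Q Q k"
  define b where "b = qpoch Q Q (n - Suc k)"
  define c where "c = qpoch Q Q n"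
  define X where "X = Q ^ Suc k"
  define Y where "Y = Q ^ (n - k)"
  have nk: "n - k = Suc (n - Suc k)"
    using True by simp
  have "X * Y = Q ^ Suc n"
    using True by (simp add: X_def Y_def power_add[symmetric])
  then have Sn: "qpoch Q Q (Suc n) = c * (1 - X * Y)"
    by (simp add: qpoch_Suc c_def)
  have Sk: "qpoch Q Q (Suc k) = a * (1 - X)"
    by (simp add: qpoch_Suc a_def X_def)
  have nk': "qpoch Q Q (n - k) = b * (1 - Y)"
    unfolding nk by (simp add: qpoch_Suc b_def Y_def nk)
  have "a \<noteq> 0" "b \<noteq> 0" "1 - X \<noteq> 0" "1 - Y \<noteq> 0"
    using nz[of k] nz[of "n - Suc k"] nz[of "Suc k"] nz[of "n - k"] Sk nk'
    by (auto simp: a_def b_def)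
  then have "c / (a * (b * (1 - Y))) + X * (c / (a * (1 - X) * b))
      = c * (1 - X * Y) / (a * (1 - X) * (b * (1 - Y)))"
    by (simp add: divide_simps) (simp add: algebra_simps)
  then show ?thesis
    using True by (simp add: gauss_binom_def Sn Sk nk' a_def b_def c_def X_def)
next
  case False
  then show ?thesis
    by (cases "k = n") simp_all
qed

lemma vandermonde_exponent:
  assumes "j \<le> k" "Suc k - j \<le> (n::nat)"
  shows "Suc k - j + j * (n + j - k) = Suc k + j * (n + j - Suc k)"
proof -
  obtain d where d: "k = j + d"
    using assms(1) le_Suc_ex by blast
  then obtain e where "n = Suc d + e"
    using assms(2) le_Suc_ex by (metis Suc_diff_le add_diff_cancel_left' le_add1)
  then show ?thesis
    unfolding d by (simp add: algebra_simps)
qed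

lemma vandermonde_term_Suc:
  assumes "j \<le> k"
  shows "gauss_binom Q m j * gauss_binom Q (Suc n) (Suc k - j) * Q ^ (j * (Suc n + j - Suc k))
    = gauss_binom Q m j * gauss_binom Q n (k - j) * Q ^ (j * (n + j - k))
      + Q ^ Suc k * (gauss_binom Q m j * gauss_binom Q n (Suc k - j) * Q ^ (j * (n + j - Suc k)))"
proof -
  have powers: "Q ^ Suc (k - j) * gauss_binom Q n (Suc k - j) * Q ^ (j * (n + j - k))
      = Q ^ Suc k * gauss_binom Q n (Suc k - j) * Q ^ (j * (n + j - Suc k))"
  proof (cases "Suc k - j \<le> n")
    case True
    then have "Q ^ Suc (k - j) * Q ^ (j * (n + j - k)) = Q ^ Suc k * Q ^ (j * (n + j - Suc k))"
      using vandermonde_exponent[OF assms] assms by (simp add: power_add[symmetric] Suc_diff_le)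
    then show ?thesis
      by (metis mult.assoc mult.commute)
  qed simp
  have "gauss_binom Q (Suc n) (Suc k - j) = gauss_binom Q n (k - j) + Q ^ Suc (k - j) * gauss_binom Q n (Suc k - j)"
    using gauss_binom_Suc_Suc[of n "k - j"] assms by (simp add: Suc_diff_le)
  then have "gauss_binom Q m j * gauss_binom Q (Suc n) (Suc k - j) * Q ^ (j * (Suc n + j - Suc k))
      = gauss_binom Q m j * gauss_binom Q n (k - j) * Q ^ (j * (n + j - k))
        + gauss_binom Q m j * (Q ^ Suc (k - j) * gauss_binom Q n (Suc k - j) * Q ^ (j * (n + j - k)))"
    by (simp add: algebra_simps)
  then show ?thesis
    unfolding powers by (simp add: algebra_simps)
qed

theorem q_vandermonde:
  "(\<Sum>j\<le>k. gauss_binom Q m j * gauss_binom Q n (k - j) * Q ^ (j * (n + j - k))) = gauss_binom Q (m + n) k"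
proof (induction n arbitrary: k)
  case 0
  have "(\<Sum>j\<le>k. gauss_binom Q m j * gauss_binom Q 0 (k - j) * Q ^ (j * (0 + j - k)))
      = (\<Sum>j\<le>k. if j = k then gauss_binom Q m k else 0)"
    by (rule sum.cong) auto
  then show ?case
    by simp
next
  case (Suc n)
  show ?case
  proof (cases k)
    case (Suc k')
    let ?T = "\<lambda>n k j. gauss_binom Q m j * gauss_binom Q n (k - j) * Q ^ (j * (n + j - k))"
    have "(\<Sum>j\<le>k'. ?T (Suc n) (Suc k') j) = (\<Sum>j\<le>k'. ?T n k' j + Q ^ Suc k' * ?T n (Suc k') j)"
      by (rule sum.cong[OF refl], rule vandermonde_term_Suc) simp
    moreover have "?T (Suc n) (Suc k') (Suc k') = Q ^ Suc k' * ?T n (Suc k') (Suc k')"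
      by (simp add: power_add[symmetric] algebra_simps)
    ultimately have "(\<Sum>j\<le>Suc k'. ?T (Suc n) (Suc k') j)
        = (\<Sum>j\<le>k'. ?T n k' j) + Q ^ Suc k' * (\<Sum>j\<le>Suc k'. ?T n (Suc k') j)"
      by (simp add: sum.distrib sum_distrib_left algebra_simps)
    also have "\<dots> = gauss_binom Q (m + Suc n) (Suc k')"
      by (simp add: Suc.IH gauss_binom_Suc_Suc)
    finally show ?thesis
      using Suc by simp
  qed simp
qed

lemma gauss_binom_eq_qpoch_divide:
  assumes "j \<le> n"
  shows "gauss_binom Q n j = qpoch (Q ^ (n - j + 1)) Q j / qpoch Q Q j"
proof -
  have "qpoch Q Q n = qpoch Q Q (n - j) * qpoch (Q ^ (n - j + 1)) Q j"
    using qpoch_add[of Q Q "n - j" j] assms by (simp add: mult.commute)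
  then show ?thesis
    using assms nz[of "n - j"] by (simp add: gauss_binom_def field_simps)
qed

lemma q_vandermonde_convolution:
  "(\<Sum>j\<le>n. \<Sum>l\<le>m. gauss_binom Q n j * gauss_binom Q m l * Q ^ (j * (m - l)) * f (j + l))
    = (\<Sum>k\<le>n + m. gauss_binom Q (n + m) k * f k)"
proof -
  define h where "h j l = gauss_binom Q n j * gauss_binom Q m l * Q ^ (j * (m - l)) * f (j + l)" for j l
  have "(\<Sum>k\<le>n + m. gauss_binom Q (n + m) k * f k) = (\<Sum>k\<le>n + m. \<Sum>j\<le>k. h j (k - j))"
    unfolding q_vandermonde[symmetric] sum_distrib_right
    by (intro sum.cong refl) (auto simp: h_def diff_diff_right)
  also have "\<dots> = (\<Sum>(j, l)\<in>{(j, l). j + l \<le> n + m}. h j l)"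
    by (rule sum.triangle_reindex_eq[symmetric])
  also have "\<dots> = (\<Sum>(j, l)\<in>{..n} \<times> {..m}. h j l)"
  proof (rule sum.mono_neutral_right)
    show "finite {(j, l). j + l \<le> n + m}"
      by (rule finite_subset[of _ "{..n + m} \<times> {..n + m}"]) auto
  qed (auto simp: h_def dest: gauss_binom_nonzero_imp_le)
  finally show ?thesis
    by (simp add: sum.cartesian_product h_def)
qed

end

lemma bounded_gauss_binom:
  assumes Q: "norm Q < 1"
  obtains C where "\<And>n k. norm (gauss_binom Q n k) \<le> C"
proof -
  obtain P where P: "\<And>n. norm (qpoch Q Q n) \<le> P"
    using Bseq_qpoch[OF Q] BseqE by metis
  obtain K where K: "\<And>n. norm (inverse (qpoch Q Q n)) \<le> K"
    using inverse_qpoch_self_bound[OF Q] by blast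
  have nonneg: "0 \<le> P" "0 \<le> K"
    using order.trans[OF norm_ge_zero P] order.trans[OF norm_ge_zero K] by auto
  have "norm (gauss_binom Q n k) \<le> P * K * K" for n k
  proof (cases "k \<le> n")
    case True
    have "norm (gauss_binom Q n k)
        = norm (qpoch Q Q n) * norm (inverse (qpoch Q Q k)) * norm (inverse (qpoch Q Q (n - k)))"
      using True by (simp add: gauss_binom_def norm_mult norm_divide norm_inverse divide_inverse)
    also have "\<dots> \<le> P * K * K"
      using nonneg by (intro mult_mono P K) auto
    finally show ?thesis .
  qed (use nonneg in simp)
  then show thesis
    using that by blast
qed

section \<open>Rearranging summable families\<close>

lemma summable_on_product_nonneg:
  fixes f g :: "_ \<Rightarrow> real"
  assumes f: "f summable_on A" and g: "g summable_on B"
    and nonneg: "\<And>x. 0 \<le> f x" "\<And>y. 0 \<le> g y"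
  shows "(\<lambda>(x, y). f x * g y) summable_on (A \<times> B)"
proof (rule summable_on_SigmaI[where g = "\<lambda>x. f x * infsum g B"])
  show "((\<lambda>y. case (x, y) of (x, y) \<Rightarrow> f x * g y) has_sum f x * infsum g B) B" for x
    using has_sum_cmult_right[OF has_sum_infsum[OF g], of "f x"] by simp
qed (use f nonneg in \<open>auto intro: summable_on_cmult_left\<close>)

lemma summable_on_geometric:
  fixes a :: real
  assumes "0 \<le> a" "a < 1"
  shows "(\<lambda>n. a ^ n) summable_on UNIV"
  using assms by (subst summable_on_UNIV_nonneg_real_iff) (auto intro: summable_geometric)

lemma summable_on_geometric4:
  fixes a b c d :: real
  assumes "0 \<le> a" "a < 1" "0 \<le> b" "b < 1" "0 \<le> c" "c < 1" "0 \<le> d" "d < 1"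
  shows "(\<lambda>(n, j, l, p). a ^ n * (b ^ j * (c ^ l * d ^ p))) summable_on UNIV"
proof -
  have "(\<lambda>(l, p). c ^ l * d ^ p) summable_on UNIV"
    using summable_on_product_nonneg[OF summable_on_geometric summable_on_geometric] assms by auto
  then have "(\<lambda>(j, l, p). b ^ j * (c ^ l * d ^ p)) summable_on UNIV"
    using summable_on_product_nonneg[OF summable_on_geometric] assms
    by (fastforce simp: case_prod_unfold)
  then show ?thesis
    using summable_on_product_nonneg[OF summable_on_geometric] assms
    by (fastforce simp: case_prod_unfold)
qed

lemma summable_on_Pair_section:
  fixes f :: "'a \<times> 'b \<Rightarrow> complex"
  assumes "f summable_on UNIV"
  shows "(\<lambda>y. f (x, y)) summable_on UNIV"
  using summable_on_SigmaD1[of "\<lambda>x y. f (x, y)" UNIV "\<lambda>_. UNIV" x] assms by simp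

lemma has_sum_imp_sums_fibers:
  fixes f :: "'a \<Rightarrow> 'b::{topological_comm_monoid_add, t3_space}" and deg :: "'a \<Rightarrow> nat"
  assumes f: "(f has_sum s) S" and fin: "\<And>N. finite {x \<in> S. deg x = N}"
  shows "(\<lambda>N. sum f {x \<in> S. deg x = N}) sums s"
proof -
  have "bij_betw snd (SIGMA N:UNIV. {x \<in> S. deg x = N}) S"
    by (rule bij_betw_byWitness[where f' = "\<lambda>x. (deg x, x)"]) auto
  then have "((\<lambda>(N, x). f x) has_sum s) (SIGMA N:UNIV. {x \<in> S. deg x = N})"
    using has_sum_reindex_bij_betw[of snd _ S f s] f by (simp add: case_prod_unfold)
  then have "((\<lambda>N. sum f {x \<in> S. deg x = N}) has_sum s) UNIV"
    by (rule has_sum_SigmaD) (use fin in \<open>auto intro: has_sum_finite\<close>)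
  then show ?thesis
    by (rule has_sum_imp_sums)
qed

section \<open>The four-fold series\<close>

definition phi_gen :: "complex \<Rightarrow> (nat \<Rightarrow> complex) \<Rightarrow> complex \<Rightarrow> complex \<Rightarrow> nat \<Rightarrow> complex" where
  "phi_gen Q A x y n = (\<Sum>k\<le>n. gauss_binom Q n k * A k * x ^ (n - k) * y ^ k)"

lemma qphi_eq_phi_gen: "qphi a b c d e x y Q n = phi_gen Q (hyper_coeff a b c d e Q) x y n"
  unfolding qphi_def phi_gen_def hyper_coeff_def by (intro sum.cong refl) (simp add: qbinom_eq_gauss_binom)

locale phi_product =
  fixes Q :: complex and A B :: "nat \<Rightarrow> complex" and x1 y1 x2 y2 t :: complex
  assumes Q: "norm Q < 1" and A: "Bseq A" and B: "Bseq B" and x1: "x1 \<noteq> 0"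
    and conv: "norm t * max (norm x1) (norm y1) * max (norm x2) (norm y2) < 1"
begin

definition lead :: "nat \<Rightarrow> nat \<Rightarrow> complex" where
  "lead n j = B n * (x1 * y2 * t) ^ n / qpoch Q Q n * gauss_binom Q n j * (y1 / x1) ^ j"

definition tail :: "nat \<Rightarrow> nat \<Rightarrow> complex" where
  "tail j l = A (j + l) * (x2 * y1 * t) ^ l / qpoch Q Q l"

definition euler :: "nat \<Rightarrow> nat \<Rightarrow> complex" where
  "euler j p = (x1 * x2 * t * Q ^ j) ^ p / qpoch Q Q p"

definition summand :: "nat \<times> nat \<times> nat \<times> nat \<Rightarrow> complex" where
  "summand = (\<lambda>(n, j, l, p). lead n j * tail j l * euler j p)"

lemma lead_eq_0: "n < j \<Longrightarrow> lead n j = 0"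
  by (simp add: lead_def)

lemma norm_products_lt_1:
  "norm (x1 * x2 * t) < 1" "norm (x2 * y1 * t) < 1"
  "norm t * norm y2 * max (norm x1) (norm y1) < 1"
proof -
  have "norm t * u * v \<le> norm t * max (norm x1) (norm y1) * max (norm x2) (norm y2)"
    if "0 \<le> u" "u \<le> max (norm x1) (norm y1)" "0 \<le> v" "v \<le> max (norm x2) (norm y2)" for u v
    using that by (intro mult_mono) auto
  from this[of "norm x1" "norm x2"] this[of "norm y1" "norm x2"] this[of "max (norm x1) (norm y1)" "norm y2"]
  show "norm (x1 * x2 * t) < 1" "norm (x2 * y1 * t) < 1"
    "norm t * norm y2 * max (norm x1) (norm y1) < 1"
    using conv by (simp_all add: norm_mult mult_ac le_max_iff_disj)
qed

lemma norm_tail_le: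
  obtains C where "\<And>j l. norm (tail j l) \<le> C * norm (x2 * y1 * t) ^ l"
proof -
  obtain CA where CA: "\<And>k. norm (A k) \<le> CA"
    using A BseqE by metis
  obtain K where K: "\<And>n. norm (inverse (qpoch Q Q n)) \<le> K"
    using inverse_qpoch_self_bound[OF Q] by blast
  have "norm (tail j l) \<le> CA * K * norm (x2 * y1 * t) ^ l" for j l
  proof -
    have "norm (tail j l) = norm (A (j + l)) * norm (inverse (qpoch Q Q l)) * norm (x2 * y1 * t) ^ l"
      by (simp add: tail_def norm_mult norm_power norm_divide divide_inverse norm_inverse mult_ac)
    also have "\<dots> \<le> CA * K * norm (x2 * y1 * t) ^ l"
      using order.trans[OF norm_ge_zero CA] order.trans[OF norm_ge_zero K]
      by (intro mult_mono CA K) auto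
    finally show ?thesis .
  qed
  then show thesis
    using that by blast
qed

lemma norm_euler_le:
  obtains C where "\<And>j p. norm (euler j p) \<le> C * norm (x1 * x2 * t) ^ p"
proof -
  obtain K where K: "\<And>n. norm (inverse (qpoch Q Q n)) \<le> K"
    using inverse_qpoch_self_bound[OF Q] by blast
  have "norm (euler j p) \<le> K * norm (x1 * x2 * t) ^ p" for j p
  proof -
    have "norm (euler j p) = norm (inverse (qpoch Q Q p)) * norm (x1 * x2 * t * Q ^ j) ^ p"
      by (simp add: euler_def norm_mult norm_power norm_divide divide_inverse norm_inverse mult.commute)
    also have "\<dots> \<le> K * norm (x1 * x2 * t) ^ p"
      by (intro mult_mono K power_mono norm_mult_power_le[OF Q]) (auto intro: order.trans[OF _ K])
    finally show ?thesis .
  qed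
  then show thesis
    using that by blast
qed

lemma norm_monomial_le:
  assumes "j \<le> n"
  shows "norm ((x1 * y2 * t) ^ n * (y1 / x1) ^ j) \<le> (norm t * norm y2 * max (norm x1) (norm y1)) ^ n"
proof -
  define M where "M = max (norm x1) (norm y1)"
  have "x1 ^ n = x1 ^ (n - j) * x1 ^ j"
    using assms by (simp add: power_add[symmetric])
  then have "(x1 * y2 * t) ^ n * (y1 / x1) ^ j = (y2 * t) ^ n * x1 ^ (n - j) * y1 ^ j"
    using x1 by (simp add: power_mult_distrib power_divide field_simps)
  then have "norm ((x1 * y2 * t) ^ n * (y1 / x1) ^ j)
      = (norm t * norm y2) ^ n * norm x1 ^ (n - j) * norm y1 ^ j"
    by (simp add: norm_mult norm_power mult_ac)
  also have "\<dots> \<le> (norm t * norm y2) ^ n * M ^ (n - j) * M ^ j"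
    unfolding M_def by (intro mult_mono power_mono mult_nonneg_nonneg zero_le_power) (auto simp: le_max_iff_disj)
  also have "\<dots> = (norm t * norm y2 * M) ^ n"
    using assms by (simp add: power_add[symmetric] power_mult_distrib mult.assoc)
  finally show ?thesis
    by (simp add: M_def)
qed

(* With rho = gamma^2 < 1, the bound rho^n <= gamma^n * gamma^j for j <= n makes the
   (n, j)-sum converge despite the n + 1 values of j. *)
lemma norm_lead_le:
  defines "\<gamma> \<equiv> sqrt (norm t * norm y2 * max (norm x1) (norm y1))"
  obtains C where "\<And>n j. norm (lead n j) \<le> C * (\<gamma> ^ n * \<gamma> ^ j)"
proof -
  obtain CB where CB: "\<And>k. norm (B k) \<le> CB"
    using B BseqE by metis
  obtain K where K: "\<And>n. norm (inverse (qpoch Q Q n)) \<le> K"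
    using inverse_qpoch_self_bound[OF Q] by blast
  obtain CG where CG: "\<And>n k. norm (gauss_binom Q n k) \<le> CG"
    using bounded_gauss_binom[OF Q] by blast
  have nonneg: "0 \<le> CB" "0 \<le> K" "0 \<le> CG"
    using order.trans[OF norm_ge_zero CB] order.trans[OF norm_ge_zero K] order.trans[OF norm_ge_zero CG]
    by auto
  have "norm (lead n j) \<le> CB * K * CG * (\<gamma> ^ n * \<gamma> ^ j)" for n j
  proof (cases "j \<le> n")
    case True
    have "\<gamma> ^ 2 = norm t * norm y2 * max (norm x1) (norm y1)"
      unfolding \<gamma>_def by (simp add: le_max_iff_disj)
    then have "\<gamma> ^ (n + n) = (norm t * norm y2 * max (norm x1) (norm y1)) ^ n"
      by (simp only: mult_2[symmetric] power_mult)
    then have "norm ((x1 * y2 * t) ^ n * (y1 / x1) ^ j) \<le> \<gamma> ^ (n + n)"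
      using norm_monomial_le[OF True] by simp
    also have "\<dots> \<le> \<gamma> ^ n * \<gamma> ^ j"
      using True norm_products_lt_1(3) unfolding power_add[symmetric] \<gamma>_def
      by (intro power_decreasing) (auto simp: le_max_iff_disj)
    finally have mon: "norm ((x1 * y2 * t) ^ n * (y1 / x1) ^ j) \<le> \<gamma> ^ n * \<gamma> ^ j" .
    have "norm (lead n j) = norm (B n) * norm (inverse (qpoch Q Q n)) * norm (gauss_binom Q n j)
        * norm ((x1 * y2 * t) ^ n * (y1 / x1) ^ j)"
      by (simp add: lead_def norm_mult norm_divide divide_inverse norm_inverse mult_ac)
    also have "\<dots> \<le> CB * K * CG * (\<gamma> ^ n * \<gamma> ^ j)"
      using nonneg by (intro mult_mono CB K CG mon) auto
    finally show ?thesis .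
  next
    case False
    then show ?thesis
      using nonneg by (simp add: lead_def \<gamma>_def le_max_iff_disj)
  qed
  then show thesis
    using that by blast
qed

lemma summable_summand: "summand summable_on UNIV"
proof -
  define \<gamma> where "\<gamma> = sqrt (norm t * norm y2 * max (norm x1) (norm y1))"
  define \<alpha> where "\<alpha> = norm (x2 * y1 * t)"
  define \<beta> where "\<beta> = norm (x1 * x2 * t)"
  obtain C1 where C1: "\<And>n j. norm (lead n j) \<le> C1 * (\<gamma> ^ n * \<gamma> ^ j)"
    using norm_lead_le unfolding \<gamma>_def by blast
  obtain C2 where C2: "\<And>j l. norm (tail j l) \<le> C2 * \<alpha> ^ l"
    using norm_tail_le unfolding \<alpha>_def by blast
  obtain C3 where C3: "\<And>j p. norm (euler j p) \<le> C3 * \<beta> ^ p"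
    using norm_euler_le unfolding \<beta>_def by blast
  have nonneg: "0 \<le> C1" "0 \<le> C2" "0 \<le> C3"
    using order.trans[OF norm_ge_zero C1[of 0 0]] order.trans[OF norm_ge_zero C2[of 0 0]]
      order.trans[OF norm_ge_zero C3[of 0 0]] by simp_all
  have rates: "0 \<le> \<gamma>" "\<gamma> < 1" "0 \<le> \<alpha>" "\<alpha> < 1" "0 \<le> \<beta>" "\<beta> < 1"
    using norm_products_lt_1 by (auto simp: \<gamma>_def \<alpha>_def \<beta>_def le_max_iff_disj)
  let ?dom = "\<lambda>(n, j, l, p). C1 * C2 * C3 * (\<gamma> ^ n * (\<gamma> ^ j * (\<alpha> ^ l * \<beta> ^ p)))"
  have dom: "?dom summable_on UNIV"
    using summable_on_cmult_right[OF summable_on_geometric4[OF rates(1,2,1,2,3,4,5,6)], of "C1 * C2 * C3"]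
    by (simp add: case_prod_unfold)
  moreover have bound: "norm (summand x) \<le> ?dom x" for x
  proof -
    obtain n j l p where x: "x = (n, j, l, p)"
      by (metis prod.exhaust)
    have "norm (summand x) = norm (lead n j) * norm (tail j l) * norm (euler j p)"
      by (simp add: x summand_def norm_mult)
    also have "\<dots> \<le> C1 * (\<gamma> ^ n * \<gamma> ^ j) * (C2 * \<alpha> ^ l) * (C3 * \<beta> ^ p)"
      using nonneg rates by (intro mult_mono C1 C2 C3) auto
    finally show ?thesis
      by (simp add: x mult_ac)
  qed
  show ?thesis
    by (rule abs_summable_summable, rule Infinite_Sum.abs_summable_on_comparison_test'[OF dom bound])
qed

lemma summable_norm_tail: "summable (\<lambda>l. norm (tail j l))"
proof -
  obtain C where C: "\<And>j l. norm (tail j l) \<le> C * norm (x2 * y1 * t) ^ l"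
    using norm_tail_le by blast
  have "summable (\<lambda>l. C * norm (x2 * y1 * t) ^ l)"
    using norm_products_lt_1(2) by (simp add: summable_geometric)
  then show ?thesis
    by (rule summable_comparison_test'[where N = 0]) (simp add: C)
qed

lemma has_sum_summand_fixed_n_j:
  "((\<lambda>(l, p). summand (n, j, l, p))
     has_sum lead n j * suminf (tail j) * (qpoch (x1 * x2 * t) Q j / qpoch_inf (x1 * x2 * t) Q)) UNIV"
proof -
  let ?E = "qpoch (x1 * x2 * t) Q j / qpoch_inf (x1 * x2 * t) Q"
  have tail: "(tail j has_sum suminf (tail j)) UNIV"
    by (rule norm_summable_imp_has_sum[OF summable_norm_tail summable_sums[OF summable_norm_cancel]])
      (rule summable_norm_tail)
  have "norm (x1 * x2 * t * Q ^ j) < 1"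
    using norm_mult_power_le[OF Q, of "x1 * x2 * t" j] norm_products_lt_1(1) by simp
  then have euler: "(euler j has_sum ?E) UNIV"
    unfolding euler_def[abs_def]
    by (rule norm_summable_imp_has_sum[OF summable_norm_q_exp[OF Q]
        sums_qpoch_divide_qpoch_inf[OF Q norm_products_lt_1(1)]])
  have "(\<lambda>(l, p). summand (n, j, l, p)) summable_on UNIV"
    using summable_on_Pair_section[OF summable_on_Pair_section[OF summable_summand]]
    by (simp add: case_prod_unfold)
  moreover have "((\<lambda>p. summand (n, j, l, p)) has_sum lead n j * tail j l * ?E) UNIV" for l
    unfolding summand_def using has_sum_cmult_right[OF euler, of "lead n j * tail j l"] by simp
  moreover have "((\<lambda>l. lead n j * tail j l * ?E) has_sum lead n j * suminf (tail j) * ?E) UNIV"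
    by (intro has_sum_cmult_left has_sum_cmult_right tail)
  ultimately have "((\<lambda>(l, p). summand (n, j, l, p)) has_sum lead n j * suminf (tail j) * ?E) (UNIV \<times> UNIV)"
    by (intro has_sum_SigmaI) auto
  then show ?thesis
    by simp
qed

lemma sums_summand_by_n:
  "(\<lambda>n. \<Sum>j\<le>n. lead n j * suminf (tail j) * (qpoch (x1 * x2 * t) Q j / qpoch_inf (x1 * x2 * t) Q))
     sums infsum summand UNIV"
proof -
  define W where "W n j = lead n j * suminf (tail j) * (qpoch (x1 * x2 * t) Q j / qpoch_inf (x1 * x2 * t) Q)" for n j
  have fixed_n: "((\<lambda>r. summand (n, r)) has_sum (\<Sum>j\<le>n. W n j)) UNIV" for n
  proof -
    have "(W n has_sum (\<Sum>j\<le>n. W n j)) {..n}"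
      by (rule has_sum_finite) simp
    also have "?this \<longleftrightarrow> (W n has_sum (\<Sum>j\<le>n. W n j)) UNIV"
      by (rule has_sum_cong_neutral) (auto simp: W_def lead_eq_0)
    finally have "(W n has_sum (\<Sum>j\<le>n. W n j)) UNIV" .
    moreover have "(\<lambda>r. summand (n, r)) summable_on UNIV"
      by (rule summable_on_Pair_section[OF summable_summand])
    ultimately have "((\<lambda>(j, r). summand (n, j, r)) has_sum (\<Sum>j\<le>n. W n j)) (UNIV \<times> UNIV)"
      using has_sum_summand_fixed_n_j unfolding W_def
      by (intro has_sum_SigmaI) (auto simp: case_prod_unfold)
    then show ?thesis
      by (simp add: case_prod_unfold)
  qed
  have "((\<lambda>(n, r). summand (n, r)) has_sum infsum summand UNIV) (UNIV \<times> UNIV)"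
    using summable_summand by (simp add: case_prod_unfold)
  then have "((\<lambda>n. \<Sum>j\<le>n. W n j) has_sum infsum summand UNIV) UNIV"
    by (rule has_sum_SigmaD) (simp add: fixed_n)
  then show ?thesis
    unfolding W_def by (rule has_sum_imp_sums)
qed

lemma summand_shifted_eq:
  "summand (j + a, j, l, p)
    = B (j + a) * y2 ^ (j + a) * x2 ^ (l + p) * t ^ (j + a + l + p) / (qpoch Q Q (j + a) * qpoch Q Q (l + p))
      * (gauss_binom Q (j + a) j * gauss_binom Q (l + p) l * Q ^ (j * p) * (A (j + l) * x1 ^ (a + p) * y1 ^ (j + l)))"
proof -
  have nz: "\<And>n. qpoch Q Q n \<noteq> 0"
    by (rule qpoch_self_nonzero[OF Q])
  have monomial: "(x1 * y2 * t) ^ (j + a) * (y1 / x1) ^ j * (x2 * y1 * t) ^ l * (x1 * x2 * t * Q ^ j) ^ p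
      = y2 ^ (j + a) * t ^ (j + a + l + p) * y1 ^ (j + l) * x2 ^ (l + p) * x1 ^ (a + p) * Q ^ (j * p)"
    using x1 by (simp add: power_mult_distrib power_add power_divide power_mult field_simps)
  have "summand (j + a, j, l, p) = B (j + a) * A (j + l) * gauss_binom Q (j + a) j
      / (qpoch Q Q (j + a) * qpoch Q Q l * qpoch Q Q p)
      * ((x1 * y2 * t) ^ (j + a) * (y1 / x1) ^ j * (x2 * y1 * t) ^ l * (x1 * x2 * t * Q ^ j) ^ p)"
    using nz by (simp add: summand_def lead_def tail_def euler_def field_simps)
  also have "\<dots> = B (j + a) * y2 ^ (j + a) * x2 ^ (l + p) * t ^ (j + a + l + p) / (qpoch Q Q (j + a) * qpoch Q Q (l + p))
      * (qpoch Q Q (l + p) / (qpoch Q Q l * qpoch Q Q p) * gauss_binom Q (j + a) j * Q ^ (j * p)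
         * (A (j + l) * x1 ^ (a + p) * y1 ^ (j + l)))"
    unfolding monomial using nz by (simp add: field_simps)
  finally show ?thesis
    by (simp add: gauss_binom_def mult_ac)
qed

lemma sum_summand_fixed_n:
  assumes "n \<le> N"
  shows "(\<Sum>j\<le>n. \<Sum>l\<le>N - n. summand (n, j, l, N - n - l))
    = gauss_binom Q N n * B n * x2 ^ (N - n) * y2 ^ n * t ^ N / qpoch Q Q N * phi_gen Q A x1 y1 N"
proof -
  define M where "M = N - n"
  define c where "c = B n * y2 ^ n * x2 ^ M * t ^ N / (qpoch Q Q n * qpoch Q Q M)"
  define f where "f k = A k * x1 ^ (N - k) * y1 ^ k" for k
  have nz: "\<And>n. qpoch Q Q n \<noteq> 0"
    by (rule qpoch_self_nonzero[OF Q])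
  have "summand (n, j, l, M - l) = c * (gauss_binom Q n j * gauss_binom Q M l * Q ^ (j * (M - l)) * f (j + l))"
    if "j \<le> n" "l \<le> M" for j l
  proof -
    have "j + (n - j) = n" "l + (M - l) = M" "j + (n - j) + l + (M - l) = N" "n - j + (M - l) = N - (j + l)"
      using that assms by (auto simp: M_def)
    then show ?thesis
      using summand_shifted_eq[of j "n - j" l "M - l"] by (simp add: c_def f_def)
  qed
  then have "(\<Sum>j\<le>n. \<Sum>l\<le>M. summand (n, j, l, M - l))
      = c * (\<Sum>j\<le>n. \<Sum>l\<le>M. gauss_binom Q n j * gauss_binom Q M l * Q ^ (j * (M - l)) * f (j + l))"
    by (simp add: sum_distrib_left)
  also have "\<dots> = c * (\<Sum>k\<le>N. gauss_binom Q N k * f k)"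
    using q_vandermonde_convolution[OF nz, of n M f] assms by (simp add: M_def)
  also have "c = gauss_binom Q N n * B n * x2 ^ M * y2 ^ n * t ^ N / qpoch Q Q N"
    using assms nz by (simp add: c_def gauss_binom_def M_def field_simps)
  finally show ?thesis
    by (simp add: M_def phi_gen_def f_def mult.assoc)
qed

lemma sum_summand_degree:
  "sum summand {(n, j, l, p). j \<le> n \<and> n + l + p = N}
    = phi_gen Q A x1 y1 N * phi_gen Q B x2 y2 N * t ^ N / qpoch Q Q N"
proof -
  let ?h = "\<lambda>(n, j, l). (n, j, l, N - n - l)"
  let ?D = "SIGMA n:{..N}. SIGMA j:{..n}. {..N - n}"
  have "{(n, j, l, p). j \<le> n \<and> n + l + p = N} = ?h ` ?D"
    by (auto simp: image_iff)
  moreover have "inj_on ?h ?D"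
    by (auto simp: inj_on_def)
  ultimately have "sum summand {(n, j, l, p). j \<le> n \<and> n + l + p = N}
      = (\<Sum>n\<le>N. \<Sum>j\<le>n. \<Sum>l\<le>N - n. summand (n, j, l, N - n - l))"
    by (simp add: sum.reindex sum.Sigma case_prod_unfold)
  also have "\<dots> = (\<Sum>n\<le>N. gauss_binom Q N n * B n * x2 ^ (N - n) * y2 ^ n * t ^ N / qpoch Q Q N
      * phi_gen Q A x1 y1 N)"
    by (intro sum.cong refl sum_summand_fixed_n) simp
  also have "\<dots> = phi_gen Q A x1 y1 N * phi_gen Q B x2 y2 N * t ^ N / qpoch Q Q N"
    by (simp add: phi_gen_def[of Q B] sum_distrib_left sum_distrib_right sum_divide_distrib mult_ac)
  finally show ?thesis .
qed

lemma sums_phi_product: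
  "(\<lambda>N. phi_gen Q A x1 y1 N * phi_gen Q B x2 y2 N * t ^ N / qpoch Q Q N) sums infsum summand UNIV"
proof -
  let ?S = "{(n, j, l, p). j \<le> n} :: (nat \<times> nat \<times> nat \<times> nat) set"
  let ?deg = "\<lambda>(n, j, l, p). n + l + p :: nat"
  have fiber: "{x \<in> ?S. ?deg x = N} = {(n, j, l, p). j \<le> n \<and> n + l + p = N}" for N
    by auto
  have "(summand has_sum infsum summand UNIV) UNIV"
    using summable_summand by (simp add: summable_iff_has_sum_infsum)
  also have "?this \<longleftrightarrow> (summand has_sum infsum summand UNIV) ?S"
    by (rule has_sum_cong_neutral) (auto simp: summand_def lead_eq_0)
  finally have "(\<lambda>N. sum summand {x \<in> ?S. ?deg x = N}) sums infsum summand UNIV"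
  proof (rule has_sum_imp_sums_fibers)
    show "finite {x \<in> ?S. ?deg x = N}" for N
      unfolding fiber by (rule finite_subset[of _ "{..N} \<times> {..N} \<times> {..N} \<times> {..N}"]) auto
  qed
  then show ?thesis
    by (simp only: fiber sum_summand_degree)
qed

lemma suminf_tail_factor:
  assumes "\<And>l. A (j + l) = A j * A' l"
  shows "suminf (tail j) = A j * (\<Sum>l. A' l * (x2 * y1 * t) ^ l / qpoch Q Q l)"
proof -
  have tail: "tail j = (\<lambda>l. A j * (A' l * (x2 * y1 * t) ^ l / qpoch Q Q l))"
    by (simp add: tail_def assms fun_eq_iff)
  show ?thesis
  proof (cases "A j = 0")
    case False
    have "summable (tail j)"
      by (rule summable_norm_cancel[OF summable_norm_tail])
    then have "summable (\<lambda>l. A' l * (x2 * y1 * t) ^ l / qpoch Q Q l)"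
      using False unfolding tail summable_cmult_iff by blast
    then show ?thesis
      unfolding tail by (rule suminf_mult)
  qed (simp add: tail)
qed

theorem sums_phi_product_expansion:
  defines "R \<equiv> \<lambda>n. \<Sum>j\<le>n. lead n j * suminf (tail j) * qpoch (x1 * x2 * t) Q j"
  shows "summable R \<and> (\<lambda>N. phi_gen Q A x1 y1 N * phi_gen Q B x2 y2 N * t ^ N / qpoch Q Q N)
    sums (1 / qpoch_inf (x1 * x2 * t) Q * suminf R)"
proof -
  have nonzero: "qpoch_inf (x1 * x2 * t) Q \<noteq> 0"
    using Q norm_products_lt_1(1) by (intro qpoch_inf_nonzero mult_power_ne_1)
  have R: "R sums (infsum summand UNIV * qpoch_inf (x1 * x2 * t) Q)"
    using sums_mult2[OF sums_summand_by_n, of "qpoch_inf (x1 * x2 * t) Q"] nonzero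
    by (simp add: R_def sum_distrib_right)
  show ?thesis
    using sums_summable[OF R] sums_phi_product nonzero by (simp add: sums_unique[OF R, symmetric])
qed

lemma expansion_term_hyper_coeff:
  assumes A: "A = hyper_coeff a1 b1 c1 d1 e1 Q" and B: "B = hyper_coeff a2 b2 c2 d2 e2 Q"
  shows "qpoch a2 Q n * qpoch b2 Q n * qpoch c2 Q n * (x1 * y2 * t) ^ n
           / (qpoch Q Q n * qpoch d2 Q n * qpoch e2 Q n)
         * (\<Sum>j\<le>n. qpoch (Q ^ (n - j + 1)) Q j * qpoch (x1 * x2 * t) Q j
                      * qpoch a1 Q j * qpoch b1 Q j * qpoch c1 Q j
                      / (qpoch Q Q j * qpoch d1 Q j * qpoch e1 Q j) * (y1 / x1) ^ j
                * (\<Sum>l. qpoch (a1 * Q ^ j) Q l * qpoch (b1 * Q ^ j) Q l * qpoch (c1 * Q ^ j) Q l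
                       / (qpoch Q Q l * qpoch (d1 * Q ^ j) Q l * qpoch (e1 * Q ^ j) Q l)
                       * (x2 * y1 * t) ^ l))
    = (\<Sum>j\<le>n. lead n j * suminf (tail j) * qpoch (x1 * x2 * t) Q j)"
proof -
  have tail: "suminf (tail j) = A j * (\<Sum>l. hyper_coeff (a1 * Q ^ j) (b1 * Q ^ j) (c1 * Q ^ j)
      (d1 * Q ^ j) (e1 * Q ^ j) Q l * (x2 * y1 * t) ^ l / qpoch Q Q l)" for j
    by (rule suminf_tail_factor) (simp add: A hyper_coeff_add)
  have binom: "gauss_binom Q n j = qpoch (Q ^ (n - j + 1)) Q j / qpoch Q Q j" if "j \<le> n" for j
    using gauss_binom_eq_qpoch_divide[OF qpoch_self_nonzero[OF Q] that] .
  show ?thesis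
    unfolding sum_distrib_left
    by (intro sum.cong refl)
      (simp only: atMost_iff lead_def binom tail,
        simp only: A B hyper_coeff_def divide_inverse inverse_mult_distrib mult_ac)
qed

end

theorem theorem6:
  fixes q :: real and a1 b1 c1 d1 e1 x1 y1 a2 b2 c2 d2 e2 x2 y2 t :: complex
  assumes q: "0 < q" "q < 1"
    and d1: "\<forall>m::nat. d1 \<noteq> 1 / complex_of_real q ^ m"
    and e1: "\<forall>m::nat. e1 \<noteq> 1 / complex_of_real q ^ m"
    and d2: "\<forall>m::nat. d2 \<noteq> 1 / complex_of_real q ^ m"
    and e2: "\<forall>m::nat. e2 \<noteq> 1 / complex_of_real q ^ m"
    and x1: "x1 \<noteq> 0"
    and conv: "norm t * max (norm x1) (norm y1) * max (norm x2) (norm y2) < 1"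
  shows
    "let Q = complex_of_real q;
         R = (\<lambda>n. qpoch a2 Q n * qpoch b2 Q n * qpoch c2 Q n * (x1 * y2 * t) ^ n
                   / (qpoch Q Q n * qpoch d2 Q n * qpoch e2 Q n)
              * (\<Sum>j\<le>n. qpoch (Q ^ (n - j + 1)) Q j * qpoch (x1 * x2 * t) Q j
                           * qpoch a1 Q j * qpoch b1 Q j * qpoch c1 Q j
                           / (qpoch Q Q j * qpoch d1 Q j * qpoch e1 Q j) * (y1 / x1) ^ j
                     * (\<Sum>l. qpoch (a1 * Q ^ j) Q l * qpoch (b1 * Q ^ j) Q l
                              * qpoch (c1 * Q ^ j) Q l
                            / (qpoch Q Q l * qpoch (d1 * Q ^ j) Q l * qpoch (e1 * Q ^ j) Q l)
                            * (x2 * y1 * t) ^ l)))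
     in summable R \<and>
        (\<lambda>n. qphi a1 b1 c1 d1 e1 x1 y1 Q n * qphi a2 b2 c2 d2 e2 x2 y2 Q n * t ^ n / qpoch Q Q n)
          sums ((1 / qpoch_inf (x1 * x2 * t) Q) * (\<Sum>n. R n))"
proof -
  define Q where "Q = complex_of_real q"
  have Q: "norm Q < 1"
    using q by (simp add: Q_def)
  have poles: "d * Q ^ k \<noteq> 1" if "\<forall>m::nat. d \<noteq> 1 / complex_of_real q ^ m" for d k
    using that q by (simp add: Q_def mult_power_ne_1_iff)
  interpret phi_product Q "hyper_coeff a1 b1 c1 d1 e1 Q" "hyper_coeff a2 b2 c2 d2 e2 Q" x1 y1 x2 y2 t
    using Q x1 conv by unfold_locales (intro Bseq_hyper_coeff Q poles d1 e1 d2 e2)+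
  show ?thesis
    using sums_phi_product_expansion unfolding Let_def Q_def[symmetric]
    by (simp only: expansion_term_hyper_coeff[OF refl refl] qphi_eq_phi_gen)
qed

end
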